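(* For each integer $n\ge 0$, let $\overline{m}_o(n)$ be the number of overpartitions $\pi$ of $n$ into odd parts such that no positive integer less than $\mathrm{omoex}(\pi)$ appears as an overlined part of $\pi$, and let $\overline{M}_o(q)=\sum_{n\ge 0}\overline{m}_o(n)q^n$. Then $$\overline{M}_o(q)=\frac{(-q;q^2)_\infty}{(q;q^2)_\infty}\bigl(1-F(-q)\bigr),\qquad\text{where } F(q)=\sum_{n=1}^{\infty}\frac{(-1)^n q^{n^2}}{(q;q^2)_n}.$$
   Context: An overpartition of $n$ is a partition of $n$ (a non-increasing sequence of positive integers summing to $n$) in which the first occurrence of each distinct part value may be overlined; an overpartition into odd parts is one all of whose parts are odd. For an overpartition $\pi$ into odd parts, $\mathrm{omoex}(\pi)$ is the smallest positive odd integer that does not occur as a part of $\pi$, neither overlined nor non-overlined (the empty overpartition of $0$ has $\mathrm{omoex}=1$). Notation: $(a;q)_n=\prod_{k=0}^{n-1}(1-aq^k)$, $(a;q)_\infty=\prod_{k\ge 0}(1-aq^k)$; identities are of formal power series in $q$ (equivalently analytic for $|q|<1$). *)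

theory Defs
  imports "HOL-Analysis.Analysis" "HOL-Library.Multiset"
begin

definition qpoch :: "complex \<Rightarrow> complex \<Rightarrow> nat \<Rightarrow> complex" where
  "qpoch a q n = (\<Prod>k<n. (1 - a * q ^ k))"

definition qpoch_inf :: "complex \<Rightarrow> complex \<Rightarrow> complex" where
  "qpoch_inf a q = prodinf (\<lambda>k. 1 - a * q ^ k)"

text \<open>An overpartition of n into odd parts is a pair (M, Ov): M is the multiset of
  parts (all positive odd integers, summing to n), O is the set of part values whose
  first occurrence is overlined (so O is a subset of the distinct parts).\<close>
definition odd_overpartitions :: "nat \<Rightarrow> (nat multiset \<times> nat set) set" where
  "odd_overpartitions n = {(M, Ov). (\<forall>k \<in># M. odd k) \<and> sum_mset M = n \<and> Ov \<subseteq> set_mset M}"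

definition omoex :: "nat multiset \<Rightarrow> nat" where
  "omoex M = (LEAST k. odd k \<and> k \<notin># M)"

definition mbar_o :: "nat \<Rightarrow> nat" where
  "mbar_o n = card {(M, Ov) \<in> odd_overpartitions n. \<forall>j \<in> Ov. \<not> j < omoex M}"

definition F_series :: "complex \<Rightarrow> complex" where
  "F_series q = (\<Sum>n. (-1) ^ (n+1) * q ^ ((n+1)^2) / qpoch q (q^2) (n+1))"

end

theory Submission
  imports Defs
begin

text \<open>
  Sort the counted overpartitions by their omoex 2k+1. Such an overpartition consists of the
  parts 1, 3, ..., 2k-1, each at least once and never overlined, no part 2k+1, and an arbitrary
  overpartition into odd parts of size at least 2k+3. Its generating function is therefore
  q^(k^2) / (q;q^2)_k * (-q^(2k+3);q^2)_inf / (q^(2k+3);q^2)_inf, which with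
  a_k = q^(k^2) / (-q;q^2)_k equals (-q;q^2)_inf / (q;q^2)_inf * (a_k - 2 a_(k+1)).
  Since a_0 = 1 and F(-q) = a_1 + a_2 + ..., these terms sum to the product times 1 - F(-q).
  Generating functions are handled as absolutely convergent unordered sums over the pairs
  (multiset of parts, set of overlined values), so that both groupings, by weight and by omoex,
  are legitimate.
\<close>

section \<open>Unordered sums\<close>

lemma has_sum_geometric:
  fixes x :: "'a::{real_normed_field, banach}"
  assumes "norm x < 1"
  shows "((\<lambda>k. x ^ k) has_sum 1 / (1 - x)) UNIV"
  using assms geometric_sums[OF assms]
  by (intro norm_summable_imp_has_sum) (simp_all add: norm_power summable_geometric)

lemma has_sum_mult_Times:
  fixes f :: "'a \<Rightarrow> complex" and g :: "'b \<Rightarrow> complex"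
  assumes f: "(f has_sum a) A" and g: "(g has_sum b) B"
  shows "((\<lambda>(x, y). f x * g y) has_sum (a * b)) (A \<times> B)"
proof (rule has_sum_SigmaI)
  have abs_f: "(\<lambda>x. norm (f x)) summable_on A" and abs_g: "(\<lambda>y. norm (g y)) summable_on B"
    using f g summable_on_iff_abs_summable_on_complex summable_on_def by blast+
  have "(\<lambda>x. norm (f x) * infsum (\<lambda>y. norm (g y)) B) summable_on A"
    using abs_f by (rule summable_on_cmult_left)
  then have "(\<lambda>p. norm (case p of (x, y) \<Rightarrow> f x * g y)) summable_on A \<times> B"
    using abs_g by (intro Infinite_Sum.abs_summable_on_Sigma_iff[THEN iffD2])
      (auto simp: norm_mult infsum_cmult_right' infsum_nonneg summable_on_cmult_right)
  then show "(\<lambda>(x, y). f x * g y) summable_on A \<times> B"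
    by (rule abs_summable_summable)
  show "((\<lambda>y. case (x, y) of (x, y) \<Rightarrow> f x * g y) has_sum f x * b) B" for x
    using g by (simp add: has_sum_cmult_right)
  show "((\<lambda>x. f x * b) has_sum a * b) A"
    using f by (rule has_sum_cmult_left)
qed

lemma has_sum_fibres_sums:
  fixes f :: "'a \<Rightarrow> 'b::{topological_comm_monoid_add, t3_space}"
  assumes "(f has_sum L) A" and "\<And>n. (f has_sum s n) {x \<in> A. g x = n}"
  shows "s sums L"
proof -
  have "inj_on (\<lambda>x. (g x, x)) A"
    by (auto simp: inj_on_def)
  moreover have "(\<lambda>x. (g x, x)) ` A = Sigma UNIV (\<lambda>n. {x \<in> A. g x = n})"
    by auto
  ultimately have "((\<lambda>(n, x). f x) has_sum L) (Sigma UNIV (\<lambda>n. {x \<in> A. g x = n}))"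
    using has_sum_reindex[of "\<lambda>x. (g x, x)" A "\<lambda>(n, x). f x" L] assms(1) by (simp add: o_def)
  then have "(s has_sum L) UNIV"
    by (rule has_sum_SigmaD) (use assms(2) in simp)
  then show ?thesis
    by (rule has_sum_imp_sums)
qed

lemma finite_subset_Union_incseq:
  assumes "incseq X" "finite F" "F \<subseteq> (\<Union>N. X N)"
  obtains N where "F \<subseteq> X N"
proof -
  have "X m \<subseteq> X n \<or> X n \<subseteq> X m" for m n
    using monoD[OF assms(1), of m n] monoD[OF assms(1), of n m] nat_le_linear[of m n] by blast
  then have "subset.chain UNIV (range X)"
    by (auto simp: subset.chain_def)
  then show ?thesis
    using finite_subset_Union_chain[of F "range X" UNIV] assms(2,3) that by blast
qed

lemma abs_summable_on_Union_incseq: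
  fixes f :: "'a \<Rightarrow> 'b::real_normed_vector"
  assumes "incseq X" and norm_sums: "\<And>N. ((\<lambda>x. norm (f x)) has_sum t N) (X N)"
    and bounded: "\<And>N. t N \<le> B"
  shows "(\<lambda>x. norm (f x)) summable_on (\<Union>N. X N)"
proof (subst Infinite_Sum.abs_summable_iff_bdd_above, rule bdd_aboveI2)
  fix F assume "F \<in> {F. F \<subseteq> (\<Union>N. X N) \<and> finite F}"
  then obtain N where "finite F" "F \<subseteq> X N"
    using finite_subset_Union_incseq[OF assms(1)] by blast
  then have "(\<Sum>x\<in>F. norm (f x)) \<le> t N"
    by (intro finite_sum_le_has_sum[OF norm_sums]) auto
  then show "(\<Sum>x\<in>F. norm (f x)) \<le> B"
    using bounded[of N] by linarith
qed

lemma has_sum_Union_incseq: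
  fixes f :: "'a \<Rightarrow> 'b::real_normed_vector"
  assumes "incseq X" "f summable_on (\<Union>N. X N)"
    and sums: "\<And>N. (f has_sum s N) (X N)" and "s \<longlonglongrightarrow> S"
  shows "(f has_sum S) (\<Union>N. X N)"
proof -
  define L where "L = infsum f (\<Union>N. X N)"
  have L: "(f has_sum L) (\<Union>N. X N)"
    unfolding L_def using assms(2) by (rule has_sum_infsum)
  have "s \<longlonglongrightarrow> L"
  proof (rule LIMSEQ_I)
    fix r :: real assume "0 < r"
    then have "\<forall>\<^sub>F Y in finite_subsets_at_top (\<Union>N. X N). dist (sum f Y) L < r / 2"
      using L unfolding has_sum_def by (intro tendstoD) auto
    then obtain F where F: "finite F" "F \<subseteq> (\<Union>N. X N)"
      and close: "\<And>Y. finite Y \<Longrightarrow> F \<subseteq> Y \<Longrightarrow> Y \<subseteq> (\<Union>N. X N) \<Longrightarrow> dist (sum f Y) L < r / 2"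
      unfolding eventually_finite_subsets_at_top by metis
    obtain N0 where "F \<subseteq> X N0"
      using finite_subset_Union_incseq[OF assms(1) F] .
    have "dist (s n) L \<le> r / 2" if "N0 \<le> n" for n
    proof (rule tendsto_upperbound)
      show "((\<lambda>Y. dist (sum f Y) L) \<longlongrightarrow> dist (s n) L) (finite_subsets_at_top (X n))"
        using sums[of n] unfolding has_sum_def by (intro tendsto_intros)
      have "F \<subseteq> X n" "X n \<subseteq> (\<Union>N. X N)"
        using \<open>F \<subseteq> X N0\<close> monoD[OF assms(1) that] by blast+
      then show "\<forall>\<^sub>F Y in finite_subsets_at_top (X n). dist (sum f Y) L \<le> r / 2"
        unfolding eventually_finite_subsets_at_top
        using F(1) close by (intro exI[of _ F]) (auto intro: less_imp_le)
    qed simp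
    then have "dist (s n) L < r" if "N0 \<le> n" for n
      using that \<open>0 < r\<close> by fastforce
    then show "\<exists>N0. \<forall>n\<ge>N0. norm (s n - L) < r"
      by (auto simp: dist_norm)
  qed
  then show ?thesis
    using L \<open>s \<longlonglongrightarrow> S\<close> LIMSEQ_unique by blast
qed

lemma norm_power_less_one:
  fixes x :: "'a::real_normed_div_algebra"
  assumes "norm x < 1" "0 < n"
  shows "norm (x ^ n) < 1"
  using assms by (simp add: norm_power power_less_one_iff)

lemma norm_mult_power_less_one:
  fixes a q :: "'a::real_normed_div_algebra"
  assumes "norm a < 1" "norm q \<le> 1"
  shows "norm (a * q ^ k) < 1"
proof -
  have "norm a * norm q ^ k \<le> norm a"
    using assms by (intro mult_left_le power_le_one) auto
  then show ?thesis
    using assms(1) by (simp add: norm_mult norm_power)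
qed

lemma qpoch_Suc: "qpoch a q (Suc n) = qpoch a q n * (1 - a * q ^ n)"
  by (simp add: qpoch_def)

lemma convergent_prod_qpoch:
  fixes a q :: complex
  assumes "norm q < 1"
  shows "convergent_prod (\<lambda>k. 1 - a * q ^ k)"
proof (rule abs_convergent_prod_imp_convergent_prod, rule summable_imp_abs_convergent_prod)
  have "summable (\<lambda>k. norm a * norm q ^ k)"
    using assms by (intro summable_mult summable_geometric) simp
  then show "summable (\<lambda>k. norm (1 - a * q ^ k - 1))"
    by (simp add: norm_mult norm_power)
qed

lemma qpoch_tendsto_qpoch_inf:
  fixes a q :: complex
  assumes "norm q < 1"
  shows "(\<lambda>n. qpoch a q n) \<longlonglongrightarrow> qpoch_inf a q"
proof -
  have "(\<lambda>n. \<Prod>k\<le>n. 1 - a * q ^ k) \<longlonglongrightarrow> qpoch_inf a q"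
    unfolding qpoch_inf_def by (rule convergent_prod_LIMSEQ[OF convergent_prod_qpoch[OF assms]])
  then have "(\<lambda>n. qpoch a q (Suc n)) \<longlonglongrightarrow> qpoch_inf a q"
    by (simp add: qpoch_def lessThan_Suc_atMost)
  then show ?thesis
    by (rule LIMSEQ_imp_Suc)
qed

lemma qpoch_inf_eq_qpoch_mult:
  fixes a q :: complex
  assumes "norm q < 1"
  shows "qpoch_inf a q = qpoch a q n * qpoch_inf (a * q ^ n) q"
proof -
  have "(\<lambda>k. 1 - a * q ^ k) has_prod (qpoch a q n * (\<Prod>k. 1 - a * q ^ (k + n)))"
    unfolding qpoch_def by (rule has_prod_ignore_initial_segment'[OF convergent_prod_qpoch[OF assms]])
  moreover have "(\<lambda>k. 1 - a * q ^ (k + n)) = (\<lambda>k. 1 - a * q ^ n * q ^ k)"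
    by (simp add: power_add mult_ac)
  ultimately show ?thesis
    unfolding qpoch_inf_def by (metis has_prod_unique)
qed

lemma qpoch_nonzero:
  fixes a q :: complex
  assumes "norm a < 1" "norm q \<le> 1"
  shows "qpoch a q n \<noteq> 0"
proof -
  have "1 - a * q ^ k \<noteq> 0" for k
    using norm_mult_power_less_one[OF assms, of k] by auto
  then show ?thesis
    unfolding qpoch_def by simp
qed

lemma qpoch_inf_nonzero:
  fixes a q :: complex
  assumes "norm a < 1" "norm q < 1"
  shows "qpoch_inf a q \<noteq> 0"
proof -
  have "1 - a * q ^ k \<noteq> 0" for k
    using norm_mult_power_less_one[of a q k] assms by auto
  then show ?thesis
    unfolding qpoch_inf_def by (intro prodinf_nonzero convergent_prod_qpoch assms(2))
qed

section \<open>Generating functions of partitions and overpartitions\<close>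

lemma member_le_sum_mset:
  fixes M :: "nat multiset"
  shows "x \<in># M \<Longrightarrow> x \<le> sum_mset M"
  using sum_mset.remove[of x M] by simp

lemma sum_mset_mset_set: "sum_mset (mset_set A) = (\<Sum>t\<in>A. t)"
  by (cases "finite A", induction A rule: finite_induct) auto

lemma multisets_insert_eq_image:
  "{M. set_mset M \<subseteq> insert t T} =
    (\<lambda>(M, k). M + replicate_mset k t) ` ({M. set_mset M \<subseteq> T} \<times> UNIV)"
proof (intro equalityI subsetI)
  fix M assume "M \<in> {M. set_mset M \<subseteq> insert t T}"
  then have "(filter_mset (\<lambda>x. x \<noteq> t) M, count M t) \<in> {M. set_mset M \<subseteq> T} \<times> UNIV"
    by auto
  moreover have "M = filter_mset (\<lambda>x. x \<noteq> t) M + replicate_mset (count M t) t"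
    by (auto intro: multiset_eqI)
  ultimately show "M \<in> (\<lambda>(M, k). M + replicate_mset k t) ` ({M. set_mset M \<subseteq> T} \<times> UNIV)"
    by (intro image_eqI[where x = "(filter_mset (\<lambda>x. x \<noteq> t) M, count M t)"]) simp_all
qed (fastforce split: if_splits)

lemma inj_on_add_replicate_mset:
  assumes "t \<notin> T"
  shows "inj_on (\<lambda>(M, k). M + replicate_mset k t) ({M. set_mset M \<subseteq> T} \<times> UNIV)"
proof (rule inj_onI, clarsimp)
  fix M k M' k' assume "set_mset M \<subseteq> T" "set_mset M' \<subseteq> T"
    and eq: "M + replicate_mset k t = M' + replicate_mset k' t"
  then have "count M t = 0" "count M' t = 0"
    using assms by (auto simp: count_eq_zero_iff)
  then have "k = k'"
    using arg_cong[OF eq, of "\<lambda>N. count N t"] by simp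
  then show "M = M' \<and> k = k'"
    using eq by simp
qed

lemma power_sum_mset_has_sum_multisets:
  fixes q :: complex
  assumes "norm q < 1" "finite T" "0 \<notin> T"
  shows "((\<lambda>M. q ^ sum_mset M) has_sum (\<Prod>t\<in>T. 1 / (1 - q ^ t))) {M. set_mset M \<subseteq> T}"
  using assms(2,3)
proof (induction T rule: finite_induct)
  case empty
  have "((\<lambda>M. q ^ sum_mset M) has_sum 1) {{#}}"
    using has_sum_finite[of "{{#}}" "\<lambda>M. q ^ sum_mset M"] by simp
  then show ?case
    by simp
next
  case (insert t T)
  have "norm (q ^ t) < 1"
    using assms(1) insert.prems by (intro norm_power_less_one) auto
  then have "((\<lambda>(M, k). q ^ sum_mset M * (q ^ t) ^ k) has_sum
      (\<Prod>t\<in>T. 1 / (1 - q ^ t)) * (1 / (1 - q ^ t))) ({M. set_mset M \<subseteq> T} \<times> UNIV)"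
    using insert by (intro has_sum_mult_Times has_sum_geometric) auto
  moreover have "(\<lambda>M. q ^ sum_mset M) \<circ> (\<lambda>(M, k). M + replicate_mset k t) =
      (\<lambda>(M, k). q ^ sum_mset M * (q ^ t) ^ k)"
    by (auto simp: power_add power_mult[symmetric] mult.commute)
  ultimately show ?case
    using has_sum_reindex[OF inj_on_add_replicate_mset[OF insert.hyps(2)], of "\<lambda>M. q ^ sum_mset M"]
      insert.hyps
    by (simp add: multisets_insert_eq_image mult.commute)
qed

lemma power_sum_has_sum_Pow:
  fixes q :: complex
  assumes "finite T"
  shows "((\<lambda>S. q ^ (\<Sum>t\<in>S. t)) has_sum (\<Prod>t\<in>T. 1 + q ^ t)) (Pow T)"
proof -
  have "(\<Prod>t\<in>T. q ^ t + 1) = (\<Sum>S\<in>Pow T. q ^ (\<Sum>t\<in>S. t))"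
    using prod_add[OF assms, of "\<lambda>t. q ^ t" "\<lambda>_. 1"] by (simp add: power_sum)
  then show ?thesis
    using assms by (simp add: add.commute has_sum_finite)
qed

definition overpartitions_in :: "nat set \<Rightarrow> (nat multiset \<times> nat set) set" where
  "overpartitions_in T = {(M, Ov). set_mset M \<subseteq> T \<and> Ov \<subseteq> set_mset M}"

lemma overpartitions_in_mono: "T \<subseteq> T' \<Longrightarrow> overpartitions_in T \<subseteq> overpartitions_in T'"
  by (auto simp: overpartitions_in_def)

lemma overpartitions_in_eq_image:
  assumes "finite T"
  shows "overpartitions_in T = (\<lambda>(M, S). (M + mset_set S, S)) ` ({M. set_mset M \<subseteq> T} \<times> Pow T)"
proof (intro equalityI subsetI)
  fix p assume "p \<in> overpartitions_in T"
  then obtain M Ov where p: "p = (M, Ov)" "set_mset M \<subseteq> T" "Ov \<subseteq> set_mset M"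
    by (auto simp: overpartitions_in_def)
  then have "mset_set Ov \<subseteq># M"
    using subset_imp_msubset_mset_set[of Ov "set_mset M"] mset_set_set_mset_msubset[of M] by auto
  then have "p = (M - mset_set Ov + mset_set Ov, Ov)"
    using p(1) by simp
  moreover have "(M - mset_set Ov, Ov) \<in> {M. set_mset M \<subseteq> T} \<times> Pow T"
    using p(2,3) in_diffD by fastforce
  ultimately show "p \<in> (\<lambda>(M, S). (M + mset_set S, S)) ` ({M. set_mset M \<subseteq> T} \<times> Pow T)"
    by (auto intro: rev_image_eqI)
next
  fix p assume "p \<in> (\<lambda>(M, S). (M + mset_set S, S)) ` ({M. set_mset M \<subseteq> T} \<times> Pow T)"
  then obtain M S where p: "p = (M + mset_set S, S)" "set_mset M \<subseteq> T" "S \<subseteq> T"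
    by auto
  moreover have "finite S"
    using p(3) assms by (rule finite_subset)
  ultimately show "p \<in> overpartitions_in T"
    by (auto simp: overpartitions_in_def)
qed

lemma power_sum_mset_has_sum_overpartitions_in:
  fixes q :: complex
  assumes "norm q < 1" "finite T" "0 \<notin> T"
  shows "((\<lambda>p. q ^ sum_mset (fst p)) has_sum (\<Prod>t\<in>T. (1 + q ^ t) / (1 - q ^ t)))
    (overpartitions_in T)"
proof -
  define add_S :: "nat multiset \<times> nat set \<Rightarrow> nat multiset \<times> nat set"
    where "add_S = (\<lambda>(M, S). (M + mset_set S, S))"
  have "((\<lambda>(M, S). q ^ sum_mset M * q ^ (\<Sum>t\<in>S. t)) has_sum
      (\<Prod>t\<in>T. 1 / (1 - q ^ t)) * (\<Prod>t\<in>T. 1 + q ^ t)) ({M. set_mset M \<subseteq> T} \<times> Pow T)"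
    using assms by (intro has_sum_mult_Times power_sum_mset_has_sum_multisets power_sum_has_sum_Pow)
  moreover have "(\<lambda>p. q ^ sum_mset (fst p)) \<circ> add_S = (\<lambda>(M, S). q ^ sum_mset M * q ^ (\<Sum>t\<in>S. t))"
    by (auto simp: add_S_def power_add sum_mset_mset_set)
  moreover have "inj_on add_S ({M. set_mset M \<subseteq> T} \<times> Pow T)"
    by (auto simp: add_S_def inj_on_def)
  ultimately show ?thesis
    using has_sum_reindex[of add_S _ "\<lambda>p. q ^ sum_mset (fst p)"] assms(2)
    by (simp add: overpartitions_in_eq_image add_S_def[symmetric] prod.distrib[symmetric])
qed

lemma overpartitions_in_Union_incseq:
  assumes "incseq T"
  shows "overpartitions_in (\<Union>N. T N) = (\<Union>N. overpartitions_in (T N))"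
proof (intro equalityI subsetI)
  fix p assume p: "p \<in> overpartitions_in (\<Union>N. T N)"
  then have "set_mset (fst p) \<subseteq> (\<Union>N. T N)"
    by (auto simp: overpartitions_in_def)
  then obtain N where "set_mset (fst p) \<subseteq> T N"
    using finite_subset_Union_incseq[OF assms] by blast
  with p have "p \<in> overpartitions_in (T N)"
    by (auto simp: overpartitions_in_def)
  then show "p \<in> (\<Union>N. overpartitions_in (T N))"
    by blast
qed (auto simp: overpartitions_in_def)

text \<open>
  Absolute convergence comes from the same identities at the point norm q, where all terms
  are nonnegative reals.
\<close>
lemma has_sum_power_Union_incseq:
  fixes w :: "'a \<Rightarrow> nat" and s :: "complex \<Rightarrow> nat \<Rightarrow> complex"
  assumes "incseq X"
    and sums: "\<And>x N. norm x < 1 \<Longrightarrow> ((\<lambda>p. x ^ w p) has_sum s x N) (X N)"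
    and lim: "\<And>x. norm x < 1 \<Longrightarrow> s x \<longlonglongrightarrow> S x"
    and "norm q < 1"
  shows "((\<lambda>p. q ^ w p) has_sum S q) (\<Union>N. X N)"
proof -
  define r where "r = complex_of_real (norm q)"
  have "norm r < 1"
    using assms(4) by (simp add: r_def)
  have norms: "((\<lambda>p. norm (q ^ w p)) has_sum Re (s r N)) (X N)" for N
    using has_sum_Re[OF sums[OF \<open>norm r < 1\<close>, of N]]
    by (simp add: r_def norm_power flip: of_real_power)
  have "Bseq (\<lambda>N. Re (s r N))"
    using tendsto_Re[OF lim[OF \<open>norm r < 1\<close>]] by (intro convergent_imp_Bseq convergentI)
  then obtain B where "\<forall>N. norm (Re (s r N)) \<le> B"
    by (auto elim: BseqE)
  then have "Re (s r N) \<le> B" for N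
    by (metis abs_le_D1 real_norm_def)
  then have "(\<lambda>p. norm (q ^ w p)) summable_on (\<Union>N. X N)"
    by (rule abs_summable_on_Union_incseq[OF \<open>incseq X\<close> norms])
  then have "(\<lambda>p. q ^ w p) summable_on (\<Union>N. X N)"
    by (rule abs_summable_summable)
  then show ?thesis
    by (rule has_sum_Union_incseq[OF \<open>incseq X\<close> _ sums[OF assms(4)] lim[OF assms(4)]])
qed

lemma odd_ge_eq_Union:
  fixes m :: nat
  shows "{t. odd t \<and> 2 * m + 1 \<le> t} = (\<Union>N. (\<lambda>j. 2 * (m + j) + 1) ` {..<N})"
proof (intro equalityI subsetI)
  fix t :: nat assume "t \<in> {t. odd t \<and> 2 * m + 1 \<le> t}"
  then have "t = 2 * (m + (t div 2 - m)) + 1"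
    by (auto elim!: oddE)
  then show "t \<in> (\<Union>N. (\<lambda>j. 2 * (m + j) + 1) ` {..<N})"
    by (intro UN_I[of "Suc (t div 2 - m)"] rev_image_eqI[of "t div 2 - m"]) auto
qed auto

lemma prod_odd_parts_eq_qpoch:
  fixes q :: complex
  shows "(\<Prod>t\<in>(\<lambda>j. 2 * (m + j) + 1) ` {..<N}. (1 + q ^ t) / (1 - q ^ t)) =
    qpoch (-(q ^ (2 * m + 1))) (q ^ 2) N / qpoch (q ^ (2 * m + 1)) (q ^ 2) N"
proof -
  have "inj_on (\<lambda>j. 2 * (m + j) + 1) {..<N}"
    by (auto simp: inj_on_def)
  then have "(\<Prod>t\<in>(\<lambda>j. 2 * (m + j) + 1) ` {..<N}. (1 + q ^ t) / (1 - q ^ t)) =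
      (\<Prod>j<N. (1 + q ^ (2 * (m + j) + 1)) / (1 - q ^ (2 * (m + j) + 1)))"
    by (simp add: prod.reindex)
  also have "\<dots> = (\<Prod>j<N. (1 - (-(q ^ (2 * m + 1))) * (q ^ 2) ^ j) / (1 - q ^ (2 * m + 1) * (q ^ 2) ^ j))"
    by (simp add: power_add power_mult[symmetric] algebra_simps)
  finally show ?thesis
    by (simp add: qpoch_def prod_dividef)
qed

lemma power_sum_mset_has_sum_overpartitions_odd:
  fixes q :: complex
  assumes "norm q < 1"
  shows "((\<lambda>p. q ^ sum_mset (fst p)) has_sum
      qpoch_inf (-(q ^ (2 * m + 1))) (q ^ 2) / qpoch_inf (q ^ (2 * m + 1)) (q ^ 2))
    (overpartitions_in {t. odd t \<and> 2 * m + 1 \<le> t})"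
proof -
  define T where "T N = (\<lambda>j. 2 * (m + j) + 1) ` {..<N}" for N
  have "incseq T"
    unfolding T_def by (intro monoI image_mono) auto
  then have "incseq (\<lambda>N. overpartitions_in (T N))"
    by (intro monoI overpartitions_in_mono) (auto dest: monoD)
  moreover have "((\<lambda>p. x ^ sum_mset (fst p)) has_sum
      qpoch (-(x ^ (2 * m + 1))) (x ^ 2) N / qpoch (x ^ (2 * m + 1)) (x ^ 2) N) (overpartitions_in (T N))"
    if "norm x < 1" for x N
    unfolding prod_odd_parts_eq_qpoch[symmetric] T_def
    using that by (intro power_sum_mset_has_sum_overpartitions_in) auto
  moreover have "(\<lambda>N. qpoch (-(x ^ (2 * m + 1))) (x ^ 2) N / qpoch (x ^ (2 * m + 1)) (x ^ 2) N)
      \<longlonglongrightarrow> qpoch_inf (-(x ^ (2 * m + 1))) (x ^ 2) / qpoch_inf (x ^ (2 * m + 1)) (x ^ 2)"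
    if "norm x < 1" for x
  proof -
    have "norm (x ^ (2 * m + 1)) < 1" "norm (x ^ 2) < 1"
      using that by (rule norm_power_less_one, simp)+
    then show ?thesis
      by (intro tendsto_divide qpoch_tendsto_qpoch_inf qpoch_inf_nonzero) simp_all
  qed
  ultimately show ?thesis
    unfolding odd_ge_eq_Union[of m] T_def[symmetric] overpartitions_in_Union_incseq[OF \<open>incseq T\<close>]
    using assms by (rule has_sum_power_Union_incseq)
qed

lemma odd_below_eq_image: "{t. odd t \<and> t < 2 * k + 1} = (\<lambda>j. 2 * j + 1) ` {..<(k::nat)}"
  by (auto elim!: oddE)

lemma finite_odd_below: "finite {t::nat. odd t \<and> t < 2 * k + 1}"
  unfolding odd_below_eq_image by simp

lemma sum_mset_odd_below: "sum_mset (mset_set {t. odd t \<and> t < 2 * k + 1}) = (k::nat) ^ 2"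
proof -
  have "inj_on (\<lambda>j. 2 * j + 1) {..<k}"
    by (auto simp: inj_on_def)
  then have "sum_mset (mset_set {t. odd t \<and> t < 2 * k + 1}) = (\<Sum>j<k. 2 * j + 1)"
    unfolding odd_below_eq_image by (simp add: sum_mset_mset_set sum.reindex)
  also have "\<dots> = k ^ 2"
    by (induction k) (auto simp: power2_eq_square)
  finally show ?thesis .
qed

lemma prod_odd_below_eq_qpoch:
  fixes q :: complex
  shows "(\<Prod>t\<in>{t. odd t \<and> t < 2 * k + 1}. 1 / (1 - q ^ t)) = 1 / qpoch q (q ^ 2) k"
proof -
  have "inj_on (\<lambda>j. 2 * j + 1) {..<k}"
    by (auto simp: inj_on_def)
  then show ?thesis
    unfolding odd_below_eq_image by (simp add: prod.reindex qpoch_def prod_dividef power_mult)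
qed

lemma finite_odd_overpartitions: "finite (odd_overpartitions n)"
proof (rule finite_subset)
  show "odd_overpartitions n \<subseteq> (\<Union>s\<le>n. multisets_of_size {..n} s) \<times> Pow {..n}"
  proof
    fix p assume "p \<in> odd_overpartitions n"
    then obtain M Ov where p: "p = (M, Ov)" and odd: "\<forall>k\<in>#M. odd k" and "sum_mset M = n"
      and "Ov \<subseteq> set_mset M"
      by (auto simp: odd_overpartitions_def)
    have "size M \<le> n"
      using odd \<open>sum_mset M = n\<close> by (induction M arbitrary: n) (auto dest: odd_pos)
    moreover have "set_mset M \<subseteq> {..n}"
      using member_le_sum_mset \<open>sum_mset M = n\<close> by auto
    ultimately show "p \<in> (\<Union>s\<le>n. multisets_of_size {..n} s) \<times> Pow {..n}"
      using p \<open>Ov \<subseteq> set_mset M\<close> by (auto simp: multisets_of_size_def)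
  qed
qed auto

section \<open>Decomposition by the smallest missing odd part\<close>

lemma omoex_odd_notin: "odd (omoex M) \<and> omoex M \<notin># M"
proof -
  have "2 * sum_mset M + 1 \<notin># M"
    using member_le_sum_mset[of "2 * sum_mset M + 1" M] by auto
  then have "\<exists>k. odd k \<and> k \<notin># M"
    by (intro exI[of _ "2 * sum_mset M + 1"]) simp
  then show ?thesis
    unfolding omoex_def by (rule LeastI_ex)
qed

lemma odd_less_omoex_in: "odd j \<Longrightarrow> j < omoex M \<Longrightarrow> j \<in># M"
  unfolding omoex_def using not_less_Least by blast

lemma omoex_eqI:
  assumes "odd m" "m \<notin># M" "\<And>j. odd j \<Longrightarrow> j < m \<Longrightarrow> j \<in># M"
  shows "omoex M = m"
  unfolding omoex_def using assms by (intro Least_equality) (auto simp: not_le[symmetric])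

definition mbar_overpartitions :: "(nat multiset \<times> nat set) set" where
  "mbar_overpartitions =
    {(M, Ov). (\<forall>k\<in>#M. odd k) \<and> Ov \<subseteq> set_mset M \<and> (\<forall>j\<in>Ov. \<not> j < omoex M)}"

lemma split_at_omoex:
  assumes "omoex M = 2 * k + 1"
  shows "M = mset_set {t. odd t \<and> t < 2 * k + 1} + (filter_mset (\<lambda>x. x < 2 * k + 1) M -
    mset_set {t. odd t \<and> t < 2 * k + 1}) + filter_mset (\<lambda>x. 2 * k + 1 < x) M"
proof -
  define L where "L = filter_mset (\<lambda>x. x < 2 * k + 1) M"
  have "2 * k + 1 \<notin># M"
    using omoex_odd_notin[of M] assms by simp
  then have "filter_mset (\<lambda>x. \<not> x < 2 * k + 1) M = filter_mset (\<lambda>x. 2 * k + 1 < x) M"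
    by (intro filter_mset_cong0) (metis linorder_neqE_nat not_less_iff_gr_or_eq)
  then have "M = L + filter_mset (\<lambda>x. 2 * k + 1 < x) M"
    using multiset_partition[of M "\<lambda>x. x < 2 * k + 1"] by (simp add: L_def)
  moreover have "{t. odd t \<and> t < 2 * k + 1} \<subseteq> set_mset L"
    using odd_less_omoex_in[of _ M] assms by (auto simp: L_def)
  then have "mset_set {t. odd t \<and> t < 2 * k + 1} \<subseteq># mset_set (set_mset L)"
    by (intro subset_imp_msubset_mset_set) auto
  then have "mset_set {t. odd t \<and> t < 2 * k + 1} \<subseteq># L"
    using mset_set_set_mset_msubset subset_mset.order_trans by blast
  ultimately show ?thesis
    by (simp add: L_def)
qed

lemma upper_part_in_overpartitions:
  assumes "(M, Ov) \<in> mbar_overpartitions" "omoex M = 2 * k + 1"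
  shows "(filter_mset (\<lambda>x. 2 * k + 1 < x) M, Ov) \<in> overpartitions_in {t. odd t \<and> 2 * (k + 1) + 1 \<le> t}"
proof -
  have odd: "\<forall>x\<in>#M. odd x" and "Ov \<subseteq> set_mset M" and Ov_ge: "\<forall>j\<in>Ov. 2 * k + 1 \<le> j"
    using assms by (auto simp: mbar_overpartitions_def not_less)
  have "2 * k + 1 \<notin># M"
    using omoex_odd_notin[of M] assms(2) by simp
  have "odd x \<Longrightarrow> 2 * k + 1 < x \<Longrightarrow> 2 * (k + 1) + 1 \<le> x" for x
    by (auto elim!: oddE)
  then have "set_mset (filter_mset (\<lambda>x. 2 * k + 1 < x) M) \<subseteq> {t. odd t \<and> 2 * (k + 1) + 1 \<le> t}"
    using odd by auto
  moreover have "Ov \<subseteq> set_mset (filter_mset (\<lambda>x. 2 * k + 1 < x) M)"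
  proof
    fix y assume "y \<in> Ov"
    then have "y \<in># M" "2 * k + 1 \<le> y"
      using \<open>Ov \<subseteq> set_mset M\<close> Ov_ge by auto
    moreover from this have "y \<noteq> 2 * k + 1"
      using \<open>2 * k + 1 \<notin># M\<close> by auto
    ultimately show "y \<in># filter_mset (\<lambda>x. 2 * k + 1 < x) M"
      by simp
  qed
  ultimately show ?thesis
    by (simp add: overpartitions_in_def)
qed

lemma mbar_overpartitions_omoex_eq_image:
  fixes k :: nat
  defines "base \<equiv> mset_set {t. odd t \<and> t < 2 * k + 1}"
  shows "{p \<in> mbar_overpartitions. omoex (fst p) = 2 * k + 1} =
    (\<lambda>(M, M', Ov). (base + M + M', Ov)) `
      ({M. set_mset M \<subseteq> {t. odd t \<and> t < 2 * k + 1}} \<times>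
       overpartitions_in {t. odd t \<and> 2 * (k + 1) + 1 \<le> t})"
    (is "?lhs = ?glue ` (?A \<times> ?B)")
proof (intro equalityI subsetI)
  fix p assume "p \<in> ?lhs"
  then obtain M Ov where p: "p = (M, Ov)" "p \<in> mbar_overpartitions" and omoex: "omoex M = 2 * k + 1"
    by (cases p) auto
  define L where "L = filter_mset (\<lambda>x. x < 2 * k + 1) M - base"
  define H where "H = filter_mset (\<lambda>x. 2 * k + 1 < x) M"
  have "L \<in> ?A"
    using p by (auto simp: L_def mbar_overpartitions_def dest: in_diffD)
  moreover have "(H, Ov) \<in> ?B"
    unfolding H_def using p omoex by (intro upper_part_in_overpartitions) auto
  moreover have "p = ?glue (L, H, Ov)"
    using split_at_omoex[OF omoex] p by (simp add: L_def H_def base_def)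
  ultimately show "p \<in> ?glue ` (?A \<times> ?B)"
    by (intro image_eqI[of p ?glue "(L, H, Ov)"]) simp_all
next
  fix p assume "p \<in> ?glue ` (?A \<times> ?B)"
  then obtain M1 M2 Ov where p: "p = (base + M1 + M2, Ov)"
    and M1: "set_mset M1 \<subseteq> {t. odd t \<and> t < 2 * k + 1}"
    and M2: "set_mset M2 \<subseteq> {t. odd t \<and> 2 * (k + 1) + 1 \<le> t}" and "Ov \<subseteq> set_mset M2"
    by (auto simp: overpartitions_in_def)
  have base: "x \<in># base \<longleftrightarrow> odd x \<and> x < 2 * k + 1" for x
    using finite_odd_below by (simp add: base_def)
  have "omoex (base + M1 + M2) = 2 * k + 1"
    using M1 M2 by (intro omoex_eqI) (auto simp: base)
  moreover have "\<forall>x\<in>#base + M1 + M2. odd x"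
    using M1 M2 by (auto simp: base)
  moreover have "\<forall>j\<in>Ov. 2 * k + 1 < j"
    using M2 \<open>Ov \<subseteq> set_mset M2\<close> by auto
  ultimately show "p \<in> ?lhs"
    using p \<open>Ov \<subseteq> set_mset M2\<close> by (auto simp: mbar_overpartitions_def)
qed

lemma inj_on_omoex_glue:
  "inj_on (\<lambda>(M, M', Ov). (base + M + M', Ov))
    ({M. set_mset M \<subseteq> {t. odd t \<and> t < 2 * k + 1}} \<times>
     overpartitions_in {t. odd t \<and> 2 * (k + 1) + 1 \<le> t})"
    (is "inj_on ?glue (?A \<times> ?B)")
proof (rule inj_onI)
  fix x y assume "x \<in> ?A \<times> ?B" "y \<in> ?A \<times> ?B" and eq: "?glue x = ?glue y"
  then obtain M1 M2 Ov M1' M2' Ov' where xy: "x = (M1, M2, Ov)" "y = (M1', M2', Ov')"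
    and M1: "set_mset M1 \<subseteq> {t. odd t \<and> t < 2 * k + 1}"
      "set_mset M1' \<subseteq> {t. odd t \<and> t < 2 * k + 1}"
    and M2: "set_mset M2 \<subseteq> {t. odd t \<and> 2 * (k + 1) + 1 \<le> t}"
      "set_mset M2' \<subseteq> {t. odd t \<and> 2 * (k + 1) + 1 \<le> t}"
    by (auto simp: overpartitions_in_def)
  have low: "filter_mset (\<lambda>x. x < 2 * k + 1) (N1 + N2) = N1"
    if "set_mset N1 \<subseteq> {t. odd t \<and> t < 2 * k + 1}"
      "set_mset N2 \<subseteq> {t. odd t \<and> 2 * (k + 1) + 1 \<le> t}"
    for N1 N2 :: "nat multiset"
  proof -
    have "filter_mset (\<lambda>x. x < 2 * k + 1) N1 = filter_mset (\<lambda>_. True) N1"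
      using that(1) by (intro filter_mset_cong0) auto
    moreover have "filter_mset (\<lambda>x. x < 2 * k + 1) N2 = {#}"
      using that(2) by auto
    ultimately show ?thesis
      by simp
  qed
  have "M1 + M2 = M1' + M2'"
    using eq xy by (simp add: add.assoc)
  moreover from this have "M1 = M1'"
    using low[OF M1(1) M2(1)] low[OF M1(2) M2(2)] by simp
  ultimately show "x = y"
    using eq xy by simp
qed

lemma power_sum_mset_has_sum_omoex:
  fixes q :: complex
  assumes "norm q < 1"
  shows "((\<lambda>p. q ^ sum_mset (fst p)) has_sum
      q ^ (k ^ 2) * (1 / qpoch q (q ^ 2) k *
        (qpoch_inf (-(q ^ (2 * (k + 1) + 1))) (q ^ 2) / qpoch_inf (q ^ (2 * (k + 1) + 1)) (q ^ 2))))
    {p \<in> mbar_overpartitions. omoex (fst p) = 2 * k + 1}"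
proof -
  define base where "base = mset_set {t. odd t \<and> t < 2 * k + 1}"
  define glue :: "nat multiset \<times> nat multiset \<times> nat set \<Rightarrow> nat multiset \<times> nat set"
    where "glue = (\<lambda>(M, M', Ov). (base + M + M', Ov))"
  have "((\<lambda>M. q ^ sum_mset M) has_sum (\<Prod>t\<in>{t. odd t \<and> t < 2 * k + 1}. 1 / (1 - q ^ t)))
      {M. set_mset M \<subseteq> {t. odd t \<and> t < 2 * k + 1}}"
    by (rule power_sum_mset_has_sum_multisets[OF assms finite_odd_below]) simp
  then have "((\<lambda>M. q ^ sum_mset M) has_sum 1 / qpoch q (q ^ 2) k)
      {M. set_mset M \<subseteq> {t. odd t \<and> t < 2 * k + 1}}"
    unfolding prod_odd_below_eq_qpoch .
  from has_sum_mult_Times[OF this power_sum_mset_has_sum_overpartitions_odd[OF assms, of "k + 1"]]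
  have "((\<lambda>(M, p). q ^ (k ^ 2) * (q ^ sum_mset M * q ^ sum_mset (fst p))) has_sum
      q ^ (k ^ 2) * (1 / qpoch q (q ^ 2) k *
        (qpoch_inf (-(q ^ (2 * (k + 1) + 1))) (q ^ 2) / qpoch_inf (q ^ (2 * (k + 1) + 1)) (q ^ 2))))
      ({M. set_mset M \<subseteq> {t. odd t \<and> t < 2 * k + 1}} \<times>
       overpartitions_in {t. odd t \<and> 2 * (k + 1) + 1 \<le> t})"
    unfolding case_prod_beta by (rule has_sum_cmult_right)
  moreover have "(\<lambda>p. q ^ sum_mset (fst p)) \<circ> glue =
      (\<lambda>(M, p). q ^ (k ^ 2) * (q ^ sum_mset M * q ^ sum_mset (fst p)))"
  proof -
    have "sum_mset base = k ^ 2"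
      unfolding base_def by (rule sum_mset_odd_below)
    then show ?thesis
      by (auto simp: glue_def power_add)
  qed
  ultimately show ?thesis
    using has_sum_reindex[OF inj_on_omoex_glue, of "\<lambda>p. q ^ sum_mset (fst p)"]
    unfolding mbar_overpartitions_omoex_eq_image glue_def base_def by simp
qed

lemma has_sum_mbar_overpartitions_of_size:
  fixes q :: complex
  shows "((\<lambda>p. q ^ sum_mset (fst p)) has_sum of_nat (mbar_o n) * q ^ n)
    {p \<in> mbar_overpartitions. sum_mset (fst p) = n}"
proof -
  have fibre: "{p \<in> mbar_overpartitions. sum_mset (fst p) = n} =
      {(M, Ov) \<in> odd_overpartitions n. \<forall>j \<in> Ov. \<not> j < omoex M}"
    by (auto simp: mbar_overpartitions_def odd_overpartitions_def)
  then have "finite {p \<in> mbar_overpartitions. sum_mset (fst p) = n}"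
    using finite_odd_overpartitions[of n] by (auto intro: finite_subset)
  then have "((\<lambda>p. q ^ sum_mset (fst p)) has_sum
      (\<Sum>p\<in>{p \<in> mbar_overpartitions. sum_mset (fst p) = n}. q ^ n))
      {p \<in> mbar_overpartitions. sum_mset (fst p) = n}"
    by (intro has_sum_finiteI) auto
  then show ?thesis
    unfolding mbar_o_def fibre[symmetric] by simp
qed

lemma summable_on_mbar_overpartitions:
  fixes q :: complex
  assumes "norm q < 1"
  shows "(\<lambda>p. q ^ sum_mset (fst p)) summable_on mbar_overpartitions"
proof (rule summable_on_subset_banach)
  show "(\<lambda>p. q ^ sum_mset (fst p)) summable_on overpartitions_in {t. odd t \<and> 2 * 0 + 1 \<le> t}"
    using power_sum_mset_has_sum_overpartitions_odd[OF assms, of 0] unfolding summable_on_def by blast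
  show "mbar_overpartitions \<subseteq> overpartitions_in {t. odd t \<and> 2 * 0 + 1 \<le> t}"
    by (auto simp: mbar_overpartitions_def overpartitions_in_def odd_pos Suc_le_eq)
qed

text \<open>Since (-1)^n (-q)^(n^2) = q^(n^2), this is the n-th term of F(-q).\<close>
definition F_neg_term :: "complex \<Rightarrow> nat \<Rightarrow> complex" where
  "F_neg_term q n = q ^ (n ^ 2) / qpoch (-q) (q ^ 2) n"

lemma summable_F_neg_term:
  fixes q :: complex
  assumes "norm q < 1"
  shows "summable (F_neg_term q)"
proof -
  have "norm (q ^ 2) < 1" "norm (-q) < 1"
    using assms by (simp_all add: norm_power_less_one)
  then have "(\<lambda>n. 1 / qpoch (-q) (q ^ 2) n) \<longlonglongrightarrow> 1 / qpoch_inf (-q) (q ^ 2)"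
    by (intro tendsto_divide tendsto_const qpoch_tendsto_qpoch_inf qpoch_inf_nonzero)
  then have "Bseq (\<lambda>n. 1 / qpoch (-q) (q ^ 2) n)"
    by (intro convergent_imp_Bseq convergentI)
  then obtain K where K: "\<And>n. norm (1 / qpoch (-q) (q ^ 2) n) \<le> K"
    unfolding Bseq_def by blast
  have "norm (F_neg_term q n) \<le> K * norm q ^ n" for n
  proof -
    have "norm q ^ (n ^ 2) \<le> norm q ^ n"
      using assms by (intro power_decreasing) (auto simp: power2_eq_square)
    then have "norm (F_neg_term q n) \<le> norm q ^ n * norm (1 / qpoch (-q) (q ^ 2) n)"
      by (simp add: F_neg_term_def norm_divide norm_power divide_right_mono)
    also have "\<dots> \<le> norm q ^ n * K"
      by (intro mult_left_mono K) simp
    finally show ?thesis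
      by (simp add: mult.commute)
  qed
  moreover have "summable (\<lambda>n. K * norm q ^ n)"
    using assms by (intro summable_mult summable_geometric) simp
  ultimately show ?thesis
    using summable_comparison_test' by blast
qed

lemma F_neg_term_Suc_sums:
  fixes q :: complex
  assumes "norm q < 1"
  shows "(\<lambda>n. F_neg_term q (Suc n)) sums F_series (-q)"
proof -
  have sign: "(-1) ^ m * (-q) ^ (m ^ 2) = q ^ (m ^ 2)" for m :: nat
  proof -
    have "even (m + m ^ 2)"
      by (simp add: power2_eq_square)
    then show ?thesis
      by (simp add: power_minus' power_add[symmetric])
  qed
  have "(-1) ^ (n + 1) * (-q) ^ ((n + 1) ^ 2) / qpoch (-q) ((-q) ^ 2) (n + 1) = F_neg_term q (Suc n)"
    for n
    unfolding sign by (simp add: F_neg_term_def)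
  then have "F_series (-q) = (\<Sum>n. F_neg_term q (Suc n))"
    by (simp only: F_series_def)
  then show ?thesis
    using summable_F_neg_term[OF assms] by (simp add: summable_Suc_iff summable_sums)
qed

lemma F_neg_term_Suc:
  "F_neg_term q (Suc k) = F_neg_term q k * q ^ (2 * k + 1) / (1 + q ^ (2 * k + 1))"
proof -
  have "Suc k ^ 2 = k ^ 2 + (2 * k + 1)"
    by (simp add: power2_eq_square)
  then show ?thesis
    by (simp add: F_neg_term_def qpoch_Suc power_add power_mult power_mult_distrib[symmetric]
        power2_eq_square mult_ac)
qed

lemma omoex_class_eq_F_neg_terms:
  fixes q :: complex
  assumes "norm q < 1"
  shows "q ^ (k ^ 2) * (1 / qpoch q (q ^ 2) k *
      (qpoch_inf (-(q ^ (2 * (k + 1) + 1))) (q ^ 2) / qpoch_inf (q ^ (2 * (k + 1) + 1)) (q ^ 2))) =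
    qpoch_inf (-q) (q ^ 2) / qpoch_inf q (q ^ 2) * (F_neg_term q k - 2 * F_neg_term q (Suc k))"
proof -
  define x where "x = q ^ (2 * k + 1)"
  define D where "D = qpoch (-q) (q ^ 2) k"
  define Q where "Q = qpoch q (q ^ 2) k"
  define P' where "P' = qpoch_inf (-(q ^ (2 * (k + 1) + 1))) (q ^ 2)"
  define Q' where "Q' = qpoch_inf (q ^ (2 * (k + 1) + 1)) (q ^ 2)"
  have q2: "norm (q ^ 2) < 1" and x: "norm x < 1"
    unfolding x_def using assms by (rule norm_power_less_one, simp)+
  have tail: "q * (q ^ 2) ^ (k + 1) = q ^ (2 * (k + 1) + 1)"
    by (simp add: power_mult power2_eq_square)
  have "q * (q ^ 2) ^ k = x"
    by (simp add: x_def power_mult)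
  then have D_Suc: "qpoch (-q) (q ^ 2) (Suc k) = D * (1 + x)"
    and Q_Suc: "qpoch q (q ^ 2) (Suc k) = Q * (1 - x)"
    by (simp_all add: D_def Q_def qpoch_Suc)
  have P: "qpoch_inf (-q) (q ^ 2) = D * (1 + x) * P'"
    unfolding P'_def tail[symmetric] D_Suc[symmetric] Suc_eq_plus1
    using qpoch_inf_eq_qpoch_mult[OF q2, of "-q" "k + 1"] by (simp only: mult_minus_left)
  have Q: "qpoch_inf q (q ^ 2) = Q * (1 - x) * Q'"
    unfolding Q'_def tail[symmetric] Q_Suc[symmetric] Suc_eq_plus1
    by (rule qpoch_inf_eq_qpoch_mult[OF q2])
  have "D \<noteq> 0" "Q \<noteq> 0"
    unfolding D_def Q_def using assms q2 by (intro qpoch_nonzero; simp)+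
  have "norm (q ^ (2 * (k + 1) + 1)) < 1"
    by (rule norm_power_less_one[OF assms]) simp
  then have "Q' \<noteq> 0"
    unfolding Q'_def using q2 by (rule qpoch_inf_nonzero)
  have "1 + x \<noteq> 0" "1 - x \<noteq> 0"
    using x by (auto simp: add_eq_0_iff)
  have "D * (1 + x) \<noteq> 0"
    using \<open>D \<noteq> 0\<close> \<open>1 + x \<noteq> 0\<close> by simp
  then have "F_neg_term q k - 2 * F_neg_term q (Suc k) = q ^ (k ^ 2) * (1 - x) / (D * (1 + x))"
    unfolding F_neg_term_Suc x_def[symmetric] using \<open>D \<noteq> 0\<close>
    by (simp add: F_neg_term_def D_def[symmetric] divide_simps) (simp add: algebra_simps)
  then show ?thesis
    using \<open>D \<noteq> 0\<close> \<open>Q \<noteq> 0\<close> \<open>Q' \<noteq> 0\<close> \<open>1 + x \<noteq> 0\<close> \<open>1 - x \<noteq> 0\<close>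
    unfolding P'_def[symmetric] Q'_def[symmetric] Q_def[symmetric] P Q by simp
qed

lemma omoex_classes_sums:
  fixes q :: complex
  assumes "norm q < 1"
  shows "(\<lambda>k. qpoch_inf (-q) (q ^ 2) / qpoch_inf q (q ^ 2) * (F_neg_term q k - 2 * F_neg_term q (Suc k)))
    sums (qpoch_inf (-q) (q ^ 2) / qpoch_inf q (q ^ 2) * (1 - F_series (-q)))"
proof -
  have Suc_sums: "(\<lambda>k. F_neg_term q (Suc k)) sums F_series (-q)"
    by (rule F_neg_term_Suc_sums[OF assms])
  moreover have "F_neg_term q 0 = 1"
    by (simp add: F_neg_term_def qpoch_def)
  ultimately have "F_neg_term q sums (F_series (-q) + 1)"
    using sums_Suc_iff[of "F_neg_term q" "F_series (-q)"] by simp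
  then have "(\<lambda>k. F_neg_term q k - 2 * F_neg_term q (Suc k)) sums (F_series (-q) + 1 - 2 * F_series (-q))"
    by (intro sums_diff sums_mult Suc_sums)
  then show ?thesis
    by (intro sums_mult) (simp add: algebra_simps)
qed

lemma has_sum_omoex_class:
  fixes q :: complex
  assumes "norm q < 1"
  shows "((\<lambda>p. q ^ sum_mset (fst p)) has_sum
      qpoch_inf (-q) (q ^ 2) / qpoch_inf q (q ^ 2) * (F_neg_term q k - 2 * F_neg_term q (Suc k)))
    {p \<in> mbar_overpartitions. omoex (fst p) div 2 = k}"
proof -
  have "omoex M div 2 = k \<longleftrightarrow> omoex M = 2 * k + 1" for M
    using omoex_odd_notin[of M] by (auto elim!: oddE)
  then show ?thesis
    unfolding omoex_class_eq_F_neg_terms[OF assms, symmetric]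
    using power_sum_mset_has_sum_omoex[OF assms, of k] by simp
qed

theorem mainTheorem1:
  fixes q :: complex
  assumes "norm q < 1"
  shows "(\<lambda>n. of_nat (mbar_o n) * q ^ n) sums
           (qpoch_inf (-q) (q^2) / qpoch_inf q (q^2) * (1 - F_series (-q)))"
proof -
  obtain L where L: "((\<lambda>p. q ^ sum_mset (fst p)) has_sum L) mbar_overpartitions"
    using summable_on_mbar_overpartitions[OF assms] by (auto simp: summable_on_def)
  have "(\<lambda>n. of_nat (mbar_o n) * q ^ n) sums L"
    using L has_sum_mbar_overpartitions_of_size by (rule has_sum_fibres_sums)
  moreover have "(\<lambda>k. qpoch_inf (-q) (q ^ 2) / qpoch_inf q (q ^ 2) *
      (F_neg_term q k - 2 * F_neg_term q (Suc k))) sums L"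
    using L has_sum_omoex_class[OF assms] by (rule has_sum_fibres_sums)
  then have "L = qpoch_inf (-q) (q ^ 2) / qpoch_inf q (q ^ 2) * (1 - F_series (-q))"
    using omoex_classes_sums[OF assms] by (rule sums_unique2)
  ultimately show ?thesis
    by simp
qed

end
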